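(* Let $G$ be an abelian group, $\underline{g}=(g_1,\dots,g_m)\in G^m$, and $\tilde{\underline{g}}=(g_1,\dots,g_m,g_m)\in G^{m+1}$. Let $S=\mathcal{B}(\underline{g})$ with the grading $S_d=\{\alpha\in\mathcal{B}(\underline{g})\mid\alpha_m=d\}$. Then $\mathcal{B}(\tilde{\underline{g}})\cong\tilde S$ as monoids.
   Context: $G$ is written multiplicatively. For $\underline{h}=(h_1,\dots,h_k)\in G^k$, $\mathcal{B}(\underline{h})=\{\alpha\in\mathbb{N}_0^k\mid\prod_i h_i^{\alpha_i}=1\}$, a submonoid of the additive monoid $\mathbb{N}_0^k$. For a graded monoid $S=\bigsqcup_d S_d$ (with $S_dS_e\subseteq S_{d+e}$, $|s|=d$ for $s\in S_d$), $\tilde S=\{s[i]\mid s\in S,\ 0\le i\le|s|\}$ with operation $s[i]\cdot t[j]=(s\cdot t)[i+j]$. *)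

theory Defs
  imports "HOL-Algebra.Algebra"
begin

text \<open>Elements of N_0^k are represented as functions nat => nat vanishing from index k on.
  B(h) = { alpha in N_0^k | prod_i h_i^alpha_i = 1 } for h = (h_0,...,h_{k-1}).\<close>

definition Bmon :: "('a, 'b) monoid_scheme \<Rightarrow> nat \<Rightarrow> (nat \<Rightarrow> 'a) \<Rightarrow> (nat \<Rightarrow> nat) set" where
  "Bmon G k h = {\<alpha>. (\<forall>i\<ge>k. \<alpha> i = 0) \<and>
      finprod G (\<lambda>i. h i [^]\<^bsub>G\<^esub> \<alpha> i) {..<k} = \<one>\<^bsub>G\<^esub>}"

text \<open>The tilde construction of a graded monoid (S, op) with degree function dg:
  elements s[i] are encoded as pairs (s, i) with 0 <= i <= dg s.\<close>

definition tilde_set :: "'s set \<Rightarrow> ('s \<Rightarrow> nat) \<Rightarrow> ('s \<times> nat) set" where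
  "tilde_set S dg = {(s, i). s \<in> S \<and> i \<le> dg s}"

definition tilde_op :: "('s \<Rightarrow> 's \<Rightarrow> 's) \<Rightarrow> 's \<times> nat \<Rightarrow> 's \<times> nat \<Rightarrow> 's \<times> nat" where
  "tilde_op op x y = (op (fst x) (fst y), snd x + snd y)"

definition monoid_iso ::
  "'x set \<Rightarrow> ('x \<Rightarrow> 'x \<Rightarrow> 'x) \<Rightarrow> 'x \<Rightarrow> 'y set \<Rightarrow> ('y \<Rightarrow> 'y \<Rightarrow> 'y) \<Rightarrow> 'y \<Rightarrow> ('x \<Rightarrow> 'y) \<Rightarrow> bool" where
  "monoid_iso A opA eA B opB eB f \<longleftrightarrow>
     bij_betw f A B \<and> f eA = eB \<and> (\<forall>x\<in>A. \<forall>y\<in>A. f (opA x y) = opB (f x) (f y))"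

definition vadd :: "(nat \<Rightarrow> nat) \<Rightarrow> (nat \<Rightarrow> nat) \<Rightarrow> nat \<Rightarrow> nat" where
  "vadd \<alpha> \<beta> = (\<lambda>i. \<alpha> i + \<beta> i)"

definition vzero :: "nat \<Rightarrow> nat" where "vzero = (\<lambda>i. 0)"

text \<open>g~ = (g_0,...,g_{m-1},g_{m-1}), (0-indexed) a tuple of length m+1.\<close>

definition gtilde :: "nat \<Rightarrow> (nat \<Rightarrow> 'a) \<Rightarrow> nat \<Rightarrow> 'a" where
  "gtilde m g = (\<lambda>i. if i < m then g i else g (m - 1))"

end

theory Submission
  imports Defs
begin

text \<open>Since the last two entries of gtilde m g are both g_m, the product defining
  B(gtilde m g) only depends on beta_m + beta_(m+1). Merging these two coordinates therefore
  maps B(gtilde m g) onto B(g), and the isomorphism sends beta to the merged vector together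
  with the index beta_(m+1), which is at most the merged last coordinate, i.e. the degree.
  Conversely alpha[i] is split back into alpha_m - i and i.\<close>

definition merge_last :: "nat \<Rightarrow> (nat \<Rightarrow> nat) \<Rightarrow> nat \<Rightarrow> nat" where
  "merge_last n \<beta> = \<beta>(n := \<beta> n + \<beta> (Suc n), Suc n := 0)"

definition split_last :: "nat \<Rightarrow> (nat \<Rightarrow> nat) \<Rightarrow> nat \<Rightarrow> nat \<Rightarrow> nat" where
  "split_last n \<alpha> i = \<alpha>(n := \<alpha> n - i, Suc n := i)"

lemma split_last_merge_last: "split_last n (merge_last n \<beta>) (\<beta> (Suc n)) = \<beta>"
  by (auto simp: split_last_def merge_last_def)

lemma merge_last_split_last:
  assumes "i \<le> \<alpha> n" and "\<alpha> (Suc n) = 0"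
  shows "merge_last n (split_last n \<alpha> i) = \<alpha>"
  using assms by (auto simp: split_last_def merge_last_def)

lemma merge_last_vadd: "merge_last n (vadd \<beta> \<gamma>) = vadd (merge_last n \<beta>) (merge_last n \<gamma>)"
  by (auto simp: merge_last_def vadd_def)

lemma merge_last_vzero: "merge_last n vzero = vzero"
  by (auto simp: merge_last_def vzero_def)

lemma finprod_gtilde_merge_last:
  fixes G (structure)
  assumes "comm_monoid G" and g: "\<forall>i\<le>n. g i \<in> carrier G"
  shows "finprod G (\<lambda>i. gtilde (Suc n) g i [^] \<beta> i) {..<Suc (Suc n)}
       = finprod G (\<lambda>i. g i [^] merge_last n \<beta> i) {..<Suc n}"
proof -
  interpret comm_monoid G by fact
  let ?P = "finprod G (\<lambda>i. g i [^] \<beta> i) {..<n}"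
  have gt: "gtilde (Suc n) g i \<in> carrier G" for i
    using g by (simp add: gtilde_def)
  have gn: "g n \<in> carrier G" and P: "?P \<in> carrier G"
    using g by auto
  have init: "finprod G (\<lambda>i. gtilde (Suc n) g i [^] \<beta> i) {..<n} = ?P"
    using g by (intro finprod_cong') (auto simp: gtilde_def)
  have merged_init: "finprod G (\<lambda>i. g i [^] merge_last n \<beta> i) {..<n} = ?P"
    using g by (intro finprod_cong') (auto simp: merge_last_def)
  have "finprod G (\<lambda>i. gtilde (Suc n) g i [^] \<beta> i) {..<Suc (Suc n)}
      = g n [^] \<beta> (Suc n) \<otimes> (g n [^] \<beta> n \<otimes> ?P)"
    using gt by (simp add: lessThan_Suc Pi_def init) (simp add: gtilde_def)
  also have "\<dots> = g n [^] (\<beta> n + \<beta> (Suc n)) \<otimes> ?P"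
    using gn P by (simp add: nat_pow_mult[symmetric] m_ac)
  also have "\<dots> = finprod G (\<lambda>i. g i [^] merge_last n \<beta> i) {..<Suc n}"
    using g by (simp add: lessThan_Suc Pi_def merged_init) (simp add: merge_last_def)
  finally show ?thesis .
qed

lemma Bmon_gtilde_iff_merge_last:
  fixes G (structure)
  assumes "comm_monoid G" and "\<forall>i\<le>n. g i \<in> carrier G"
  shows "\<beta> \<in> Bmon G (Suc (Suc n)) (gtilde (Suc n) g)
     \<longleftrightarrow> (\<forall>i>Suc n. \<beta> i = 0) \<and> merge_last n \<beta> \<in> Bmon G (Suc n) g"
  using finprod_gtilde_merge_last[OF assms]
  by (auto simp: Bmon_def merge_last_def Suc_le_eq)

theorem proposition4p6:
  fixes G :: "('a, 'b) monoid_scheme" and m :: nat and g :: "nat \<Rightarrow> 'a"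
  assumes "comm_group G"
    and "m \<ge> 1"
    and "\<forall>i<m. g i \<in> carrier G"
  shows "\<exists>f. monoid_iso (Bmon G (m + 1) (gtilde m g)) vadd vzero
                (tilde_set (Bmon G m g) (\<lambda>\<alpha>. \<alpha> (m - 1)))
                (tilde_op vadd) (vzero, 0) f"
proof -
  obtain n where m: "m = Suc n"
    using assms(2) by (cases m) auto
  have B: "\<beta> \<in> Bmon G (Suc (Suc n)) (gtilde (Suc n) g)
     \<longleftrightarrow> (\<forall>i>Suc n. \<beta> i = 0) \<and> merge_last n \<beta> \<in> Bmon G (Suc n) g" for \<beta>
    using assms(1,3) m by (intro Bmon_gtilde_iff_merge_last) (auto simp: comm_group_def)
  let ?B = "Bmon G (Suc (Suc n)) (gtilde (Suc n) g)"
  let ?T = "tilde_set (Bmon G (Suc n) g) (\<lambda>\<alpha>. \<alpha> n)"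
  define f where "f \<beta> = (merge_last n \<beta>, \<beta> (Suc n))" for \<beta>
  have "bij_betw f ?B ?T"
  proof (rule bij_betw_byWitness[where f' = "\<lambda>(\<alpha>, i). split_last n \<alpha> i"])
    show "\<forall>\<beta>\<in>?B. (\<lambda>(\<alpha>, i). split_last n \<alpha> i) (f \<beta>) = \<beta>"
      by (simp add: f_def split_last_merge_last)
    show "\<forall>x\<in>?T. f ((\<lambda>(\<alpha>, i). split_last n \<alpha> i) x) = x"
    proof
      fix x assume "x \<in> ?T"
      then obtain \<alpha> i where "x = (\<alpha>, i)" "i \<le> \<alpha> n" "\<alpha> (Suc n) = 0"
        by (auto simp: tilde_set_def Bmon_def)
      then show "f ((\<lambda>(\<alpha>, i). split_last n \<alpha> i) x) = x"
        by (simp add: f_def merge_last_split_last) (simp add: split_last_def)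
    qed
    show "f ` ?B \<subseteq> ?T"
      using B by (auto simp: f_def tilde_set_def merge_last_def)
    show "(\<lambda>(\<alpha>, i). split_last n \<alpha> i) ` ?T \<subseteq> ?B"
      using B by (auto simp: tilde_set_def Bmon_def merge_last_split_last) (auto simp: split_last_def)
  qed
  moreover have "f vzero = (vzero, 0)"
    by (simp add: f_def merge_last_vzero) (simp add: vzero_def)
  moreover have "f (vadd \<beta> \<gamma>) = tilde_op vadd (f \<beta>) (f \<gamma>)" for \<beta> \<gamma>
    by (simp add: f_def tilde_op_def merge_last_vadd) (simp add: vadd_def)
  ultimately show ?thesis
    unfolding m monoid_iso_def by auto
qed

end
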